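(* Assume $\kappa\le\lambda<0$, nonnegative progress values, $w\ge0$, and that a feasible trajectory pair exists. Let $(i^{cg},j^{cg})$ be a Stackelberg equilibrium (P1 leader) of the cooperative game $(A^c,B^c)$. Then $(i^{cg},j^{cg})$ is a Nash equilibrium of the blocking game $(A^b,B^b)$. Moreover, if a blocking pair $(i^b,j^b)$ (relative to $(i^{cg},j^{cg})$) is a Nash equilibrium of the cooperative game, then it is a Nash equilibrium of the blocking game.
   Context: Abstract two-player racing set-up. Player 1 (P1, the leader) chooses a trajectory $i\in\Gamma^1=\{1,\dots,n\}$, player 2 (P2) chooses $j\in\Gamma^2=\{1,\dots,m\}$. Each trajectory has a progress value $P^1_i\ge 0$ (resp. $P^2_j\ge 0$). Each trajectory is either on track or off track, and each pair $(i,j)$ either collides or not. A pair $(i,j)$ is feasible if $i$ and $j$ are both on track and $(i,j)$ does not collide. Constants $\kappa\le\lambda<0$ and $w\ge0$ are fixed. Cooperative game: $a^{c}_{i,j}=\kappa$ if $i$ is off track; otherwise $\lambda$ if $(i,j)$ collides; otherwise $P^1_i$. $b^{c}_{i,j}=\kappa$ if $j$ is off track; otherwise $\lambda$ if $(i,j)$ collides; otherwise $P^2_j$. Blocking game: $a^{b}_{i,j}=\kappa$ if $i$ is off track; otherwise $\lambda$ if $(i,j)$ collides; otherwise $P^1_i$ if $P^1_i<P^2_j$; otherwise $P^1_i+w$. $b^{b}_{i,j}=\kappa$ if $j$ is off track; otherwise $\lambda$ if $(i,j)$ collides; otherwise $P^2_j$ if $P^1_i\ge P^2_j$; otherwise $P^2_j+w$.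 Blocking pair (relative to a fixed Stackelberg equilibrium $(i^{cg},j^{cg})$ of the cooperative game): a pair $(i,j)$ such that (i) $P^1_{i^{cg}}<P^2_{j^{cg}}$; (ii) $P^1_i>P^2_j$; (iii) $(i,j)$ is feasible; (iv) for every $j^c\in\Gamma^2$ with $P^2_{j^c}>P^2_j$ one has $b^{c}_{i,j^c}\le\lambda$. For a bimatrix game $(A,B)$: $R(i)=\arg\max_{j}b_{i,j}$; $(i^*,j^* )$ is a Stackelberg equilibrium with P1 as leader if $i^*\in\arg\max_{i}\min_{j\in R(i)}a_{i,j}$ and $j^*\in R(i^* )$; $(i^*,j^* )$ is a Nash equilibrium if $a_{i^*,j^*}\ge a_{i,j^*}$ for all $i$ and $b_{i^*,j^*}\ge b_{i^*,j}$ for all $j$. Only pure strategies are considered. *)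

theory Defs
  imports Main "HOL.Real"
begin

definition feasible ::
  "(nat \<Rightarrow> bool) \<Rightarrow> (nat \<Rightarrow> bool) \<Rightarrow> (nat \<Rightarrow> nat \<Rightarrow> bool) \<Rightarrow> nat \<Rightarrow> nat \<Rightarrow> bool" where
  "feasible on1 on2 coll i j \<longleftrightarrow> on1 i \<and> on2 j \<and> \<not> coll i j"

definition a_coop ::
  "real \<Rightarrow> real \<Rightarrow> (nat \<Rightarrow> real) \<Rightarrow> (nat \<Rightarrow> bool) \<Rightarrow> (nat \<Rightarrow> nat \<Rightarrow> bool) \<Rightarrow> nat \<Rightarrow> nat \<Rightarrow> real" where
  "a_coop kap lam P1 on1 coll i j =
     (if \<not> on1 i then kap else if coll i j then lam else P1 i)"

definition b_coop ::
  "real \<Rightarrow> real \<Rightarrow> (nat \<Rightarrow> real) \<Rightarrow> (nat \<Rightarrow> bool) \<Rightarrow> (nat \<Rightarrow> nat \<Rightarrow> bool) \<Rightarrow> nat \<Rightarrow> nat \<Rightarrow> real" where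
  "b_coop kap lam P2 on2 coll i j =
     (if \<not> on2 j then kap else if coll i j then lam else P2 j)"

definition a_block ::
  "real \<Rightarrow> real \<Rightarrow> real \<Rightarrow> (nat \<Rightarrow> real) \<Rightarrow> (nat \<Rightarrow> real) \<Rightarrow> (nat \<Rightarrow> bool) \<Rightarrow> (nat \<Rightarrow> nat \<Rightarrow> bool) \<Rightarrow> nat \<Rightarrow> nat \<Rightarrow> real" where
  "a_block kap lam w P1 P2 on1 coll i j =
     (if \<not> on1 i then kap else if coll i j then lam
      else if P1 i < P2 j then P1 i else P1 i + w)"

definition b_block ::
  "real \<Rightarrow> real \<Rightarrow> real \<Rightarrow> (nat \<Rightarrow> real) \<Rightarrow> (nat \<Rightarrow> real) \<Rightarrow> (nat \<Rightarrow> bool) \<Rightarrow> (nat \<Rightarrow> nat \<Rightarrow> bool) \<Rightarrow> nat \<Rightarrow> nat \<Rightarrow> real" where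
  "b_block kap lam w P1 P2 on2 coll i j =
     (if \<not> on2 j then kap else if coll i j then lam
      else if P1 i \<ge> P2 j then P2 j else P2 j + w)"

definition best_resp :: "nat set \<Rightarrow> (nat \<Rightarrow> nat \<Rightarrow> real) \<Rightarrow> nat \<Rightarrow> nat set" where
  "best_resp S2 B i = {j \<in> S2. \<forall>j'\<in>S2. B i j' \<le> B i j}"

text \<open>Pure Stackelberg equilibrium with P1 as leader (pessimistic over ties).\<close>
definition stackelberg ::
  "nat set \<Rightarrow> nat set \<Rightarrow> (nat \<Rightarrow> nat \<Rightarrow> real) \<Rightarrow> (nat \<Rightarrow> nat \<Rightarrow> real) \<Rightarrow> nat \<Rightarrow> nat \<Rightarrow> bool" where
  "stackelberg S1 S2 A B is js \<longleftrightarrow>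
     is \<in> S1 \<and> js \<in> best_resp S2 B is \<and>
     (\<forall>i\<in>S1. Min (A i ` best_resp S2 B i) \<le> Min (A is ` best_resp S2 B is))"

definition nash ::
  "nat set \<Rightarrow> nat set \<Rightarrow> (nat \<Rightarrow> nat \<Rightarrow> real) \<Rightarrow> (nat \<Rightarrow> nat \<Rightarrow> real) \<Rightarrow> nat \<Rightarrow> nat \<Rightarrow> bool" where
  "nash S1 S2 A B is js \<longleftrightarrow>
     is \<in> S1 \<and> js \<in> S2 \<and>
     (\<forall>i\<in>S1. A i js \<le> A is js) \<and> (\<forall>j\<in>S2. B is j \<le> B is js)"

definition blocking_pair ::
  "nat \<Rightarrow> real \<Rightarrow> real \<Rightarrow> (nat \<Rightarrow> real) \<Rightarrow> (nat \<Rightarrow> real) \<Rightarrow> (nat \<Rightarrow> bool) \<Rightarrow> (nat \<Rightarrow> bool)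
    \<Rightarrow> (nat \<Rightarrow> nat \<Rightarrow> bool) \<Rightarrow> nat \<Rightarrow> nat \<Rightarrow> nat \<Rightarrow> nat \<Rightarrow> nat \<Rightarrow> bool" where
  "blocking_pair n kap lam P1 P2 on1 on2 coll m icg jcg i j \<longleftrightarrow>
     i \<in> {1..n} \<and> j \<in> {1..m} \<and>
     P1 icg < P2 jcg \<and>
     P1 i > P2 j \<and>
     feasible on1 on2 coll i j \<and>
     (\<forall>jc\<in>{1..m}. P2 jc > P2 j \<longrightarrow> b_coop kap lam P2 on2 coll i jc \<le> lam)"

end

theory Submission
  imports Defs
begin

text \<open>Since collisions and leaving the track are penalised by negative payoffs while progress is
  nonnegative, the existence of a feasible pair forces the cooperative Stackelberg leader to a
  nonnegative pessimistic value; hence the equilibrium pair is feasible, and it is even a Nash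
  equilibrium of the cooperative game. A feasible Nash equilibrium of the cooperative game is one
  of the blocking game: the blocking bonus w is awarded according to the order of the two progress
  values, and a deviation that does not increase one's own progress cannot gain the bonus either.\<close>

lemma best_resp_nonempty:
  assumes "finite S" "S \<noteq> {}"
  shows "best_resp S B i \<noteq> {}"
proof -
  have "Max (B i ` S) \<in> B i ` S"
    using assms by simp
  then obtain j where "j \<in> S" "B i j = Max (B i ` S)"
    by auto
  then show ?thesis
    using assms unfolding best_resp_def by auto
qed

lemma best_resp_coop_feasible:
  assumes "kap \<le> lam" "lam < 0"
    and "j' \<in> S2" "on2 j'" "\<not> coll i j'" "P2 j' \<ge> 0"
    and "j \<in> best_resp S2 (b_coop kap lam P2 on2 coll) i"
  shows "on2 j \<and> \<not> coll i j"
proof -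
  have "b_coop kap lam P2 on2 coll i j' \<le> b_coop kap lam P2 on2 coll i j"
    using assms(3,7) unfolding best_resp_def by auto
  then show ?thesis
    using assms(1,2,4-6) unfolding b_coop_def by (auto split: if_splits)
qed

lemma leader_value_coop:
  assumes "kap \<le> lam" "lam < 0" "finite S2"
    and "on1 i" "j' \<in> S2" "on2 j'" "\<not> coll i j'" "P2 j' \<ge> 0"
  shows "Min (a_coop kap lam P1 on1 coll i ` best_resp S2 (b_coop kap lam P2 on2 coll) i) = P1 i"
proof -
  let ?R = "best_resp S2 (b_coop kap lam P2 on2 coll) i"
  have "a_coop kap lam P1 on1 coll i j = P1 i" if "j \<in> ?R" for j
    using best_resp_coop_feasible[OF assms(1,2,5-8) that] assms(4)
    unfolding a_coop_def by simp
  moreover have "?R \<noteq> {}"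
    using best_resp_nonempty assms(3,5) by blast
  ultimately have "a_coop kap lam P1 on1 coll i ` ?R = {P1 i}"
    by auto
  then show ?thesis
    by simp
qed

text \<open>An off-track reply earns the minimum payoff kap, so it can only be a best reply if every
  on-track reply collides and kap = lam; but then those colliding replies are best replies too.\<close>

lemma best_resp_coop_on_track:
  assumes "kap \<le> lam" "lam < 0"
    and "j0 \<in> S2" "on2 j0" "P2 j0 \<ge> 0"
    and no_coll: "\<forall>j\<in>best_resp S2 (b_coop kap lam P2 on2 coll) i. \<not> coll i j"
    and j: "j \<in> best_resp S2 (b_coop kap lam P2 on2 coll) i"
  shows "on2 j"
proof (rule ccontr)
  let ?B = "b_coop kap lam P2 on2 coll"
  assume "\<not> on2 j"
  then have "?B i j = kap"
    unfolding b_coop_def by simp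
  moreover have best: "\<forall>j'\<in>S2. ?B i j' \<le> ?B i j"
    using j unfolding best_resp_def by blast
  ultimately have "?B i j0 \<le> kap"
    using assms(3) by simp
  then have "coll i j0" and "?B i j0 = ?B i j"
    using assms(1,2,4,5) \<open>?B i j = kap\<close> unfolding b_coop_def by (auto split: if_splits)
  then have "j0 \<in> best_resp S2 ?B i"
    using best assms(3) unfolding best_resp_def by simp
  then show False
    using no_coll \<open>coll i j0\<close> by blast
qed

lemma stackelberg_coop_feasible:
  assumes "kap \<le> lam" "lam < 0" "finite S2"
    and "\<forall>i\<in>S1. P1 i \<ge> 0" "\<forall>j\<in>S2. P2 j \<ge> 0"
    and "\<exists>i\<in>S1. \<exists>j\<in>S2. feasible on1 on2 coll i j"
    and st: "stackelberg S1 S2 (a_coop kap lam P1 on1 coll) (b_coop kap lam P2 on2 coll) icg jcg"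
  shows "feasible on1 on2 coll icg jcg"
proof -
  let ?A = "a_coop kap lam P1 on1 coll" and ?R = "best_resp S2 (b_coop kap lam P2 on2 coll)"
  obtain i0 j0 where i0: "i0 \<in> S1" and j0: "j0 \<in> S2" and f0: "feasible on1 on2 coll i0 j0"
    using assms(6) by blast
  have jcg: "jcg \<in> ?R icg"
    using st unfolding stackelberg_def by blast
  have "Min (?A i0 ` ?R i0) = P1 i0"
    using leader_value_coop[OF assms(1-3)] f0 j0 assms(5) unfolding feasible_def by blast
  then have value_nonneg: "0 \<le> Min (?A icg ` ?R icg)"
    using st i0 assms(4) unfolding stackelberg_def by force
  have "on1 icg \<and> \<not> coll icg j" if "j \<in> ?R icg" for j
  proof -
    have "finite (?R icg)"
      using assms(3) unfolding best_resp_def by simp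
    then have "0 \<le> ?A icg j"
      using value_nonneg that by (meson Min_le finite_imageI image_eqI order_trans)
    then show ?thesis
      using assms(1,2) unfolding a_coop_def by (auto split: if_splits)
  qed
  moreover have "on2 jcg"
    using best_resp_coop_on_track[OF assms(1,2) j0 _ _ _ jcg] calculation f0 j0 assms(5)
    unfolding feasible_def by blast
  ultimately show ?thesis
    using jcg unfolding feasible_def by blast
qed

lemma stackelberg_coop_nash:
  assumes "kap \<le> lam" "lam < 0" "finite S2"
    and "\<forall>i\<in>S1. P1 i \<ge> 0" "\<forall>j\<in>S2. P2 j \<ge> 0"
    and "\<exists>i\<in>S1. \<exists>j\<in>S2. feasible on1 on2 coll i j"
    and st: "stackelberg S1 S2 (a_coop kap lam P1 on1 coll) (b_coop kap lam P2 on2 coll) icg jcg"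
  shows "nash S1 S2 (a_coop kap lam P1 on1 coll) (b_coop kap lam P2 on2 coll) icg jcg"
proof -
  let ?A = "a_coop kap lam P1 on1 coll" and ?R = "best_resp S2 (b_coop kap lam P2 on2 coll)"
  have icg: "icg \<in> S1" and jcg: "jcg \<in> ?R icg"
    and leader: "\<forall>i\<in>S1. Min (?A i ` ?R i) \<le> Min (?A icg ` ?R icg)"
    using st unfolding stackelberg_def by auto
  have jcg_S2: "jcg \<in> S2"
    using jcg unfolding best_resp_def by simp
  have feas: "on1 icg" "on2 jcg" "\<not> coll icg jcg"
    using stackelberg_coop_feasible[OF assms] unfolding feasible_def by auto
  have value_icg: "Min (?A icg ` ?R icg) = P1 icg"
    using leader_value_coop[OF assms(1-3)] feas jcg_S2 assms(5) by blast
  have "?A i jcg \<le> ?A icg jcg" if i: "i \<in> S1" for i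
  proof (cases "on1 i \<and> \<not> coll i jcg")
    case True
    then have "Min (?A i ` ?R i) = P1 i"
      using leader_value_coop[OF assms(1-3)] feas jcg_S2 assms(5) by blast
    then show ?thesis
      using True feas leader i value_icg unfolding a_coop_def by fastforce
  next
    case False
    have "P1 icg \<ge> 0"
      using icg assms(4) by blast
    then show ?thesis
      using False feas assms(1,2) unfolding a_coop_def by auto
  qed
  then show ?thesis
    using icg jcg jcg_S2 unfolding nash_def best_resp_def by blast
qed

lemma a_block_le_of_a_coop_le:
  assumes "kap \<le> lam" "lam < 0" "w \<ge> 0"
    and "on1 i'" "\<not> coll i' j" "P1 i' \<ge> 0"
    and "a_coop kap lam P1 on1 coll i j \<le> a_coop kap lam P1 on1 coll i' j"
  shows "a_block kap lam w P1 P2 on1 coll i j \<le> a_block kap lam w P1 P2 on1 coll i' j"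
  using assms unfolding a_coop_def a_block_def by (auto split: if_splits)

lemma b_block_le_of_b_coop_le:
  assumes "kap \<le> lam" "lam < 0" "w \<ge> 0"
    and "on2 j'" "\<not> coll i j'" "P2 j' \<ge> 0"
    and "b_coop kap lam P2 on2 coll i j \<le> b_coop kap lam P2 on2 coll i j'"
  shows "b_block kap lam w P1 P2 on2 coll i j \<le> b_block kap lam w P1 P2 on2 coll i j'"
  using assms unfolding b_coop_def b_block_def by (auto split: if_splits)

lemma nash_block_of_nash_coop:
  assumes "kap \<le> lam" "lam < 0" "w \<ge> 0"
    and feas: "feasible on1 on2 coll is js" and "P1 is \<ge> 0" "P2 js \<ge> 0"
    and nash: "nash S1 S2 (a_coop kap lam P1 on1 coll) (b_coop kap lam P2 on2 coll) is js"
  shows "nash S1 S2 (a_block kap lam w P1 P2 on1 coll) (b_block kap lam w P1 P2 on2 coll) is js"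
  unfolding nash_def
proof (intro conjI ballI)
  show "is \<in> S1" "js \<in> S2"
    using nash unfolding nash_def by auto
next
  fix i assume "i \<in> S1"
  then have "a_coop kap lam P1 on1 coll i js \<le> a_coop kap lam P1 on1 coll is js"
    using nash unfolding nash_def by blast
  then show "a_block kap lam w P1 P2 on1 coll i js \<le> a_block kap lam w P1 P2 on1 coll is js"
    using a_block_le_of_a_coop_le assms(1-3,5) feas unfolding feasible_def by blast
next
  fix j assume "j \<in> S2"
  then have "b_coop kap lam P2 on2 coll is j \<le> b_coop kap lam P2 on2 coll is js"
    using nash unfolding nash_def by blast
  then show "b_block kap lam w P1 P2 on2 coll is j \<le> b_block kap lam w P1 P2 on2 coll is js"
    using b_block_le_of_b_coop_le assms(1-3,6) feas unfolding feasible_def by blast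
qed

theorem theorem2:
  fixes n m :: nat
    and P1 P2 :: "nat \<Rightarrow> real"
    and on1 on2 :: "nat \<Rightarrow> bool"
    and coll :: "nat \<Rightarrow> nat \<Rightarrow> bool"
    and kap lam w :: real
    and icg jcg :: nat
  assumes "kap \<le> lam" and "lam < 0" and "w \<ge> 0"
    and "\<forall>i\<in>{1..n}. P1 i \<ge> 0" and "\<forall>j\<in>{1..m}. P2 j \<ge> 0"
    and "\<exists>i\<in>{1..n}. \<exists>j\<in>{1..m}. feasible on1 on2 coll i j"
    and "stackelberg {1..n} {1..m} (a_coop kap lam P1 on1 coll) (b_coop kap lam P2 on2 coll) icg jcg"
  shows "nash {1..n} {1..m} (a_block kap lam w P1 P2 on1 coll) (b_block kap lam w P1 P2 on2 coll) icg jcg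
    \<and> (\<forall>ib jb. blocking_pair n kap lam P1 P2 on1 on2 coll m icg jcg ib jb
          \<and> nash {1..n} {1..m} (a_coop kap lam P1 on1 coll) (b_coop kap lam P2 on2 coll) ib jb
          \<longrightarrow> nash {1..n} {1..m} (a_block kap lam w P1 P2 on1 coll) (b_block kap lam w P1 P2 on2 coll) ib jb)"
proof
  have "finite {1..m}"
    by simp
  then have coop: "nash {1..n} {1..m} (a_coop kap lam P1 on1 coll) (b_coop kap lam P2 on2 coll) icg jcg"
    and "feasible on1 on2 coll icg jcg"
    using stackelberg_coop_nash[OF assms(1,2) _ assms(4-7)]
      stackelberg_coop_feasible[OF assms(1,2) _ assms(4-7)] by blast+
  moreover have "P1 icg \<ge> 0" "P2 jcg \<ge> 0"
    using coop assms(4,5) unfolding nash_def by auto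
  ultimately show "nash {1..n} {1..m} (a_block kap lam w P1 P2 on1 coll) (b_block kap lam w P1 P2 on2 coll) icg jcg"
    using nash_block_of_nash_coop[OF assms(1-3)] by blast
next
  show "\<forall>ib jb. blocking_pair n kap lam P1 P2 on1 on2 coll m icg jcg ib jb
          \<and> nash {1..n} {1..m} (a_coop kap lam P1 on1 coll) (b_coop kap lam P2 on2 coll) ib jb
          \<longrightarrow> nash {1..n} {1..m} (a_block kap lam w P1 P2 on1 coll) (b_block kap lam w P1 P2 on2 coll) ib jb"
  proof (intro allI impI)
    fix ib jb
    assume "blocking_pair n kap lam P1 P2 on1 on2 coll m icg jcg ib jb
          \<and> nash {1..n} {1..m} (a_coop kap lam P1 on1 coll) (b_coop kap lam P2 on2 coll) ib jb"
    then show "nash {1..n} {1..m} (a_block kap lam w P1 P2 on1 coll) (b_block kap lam w P1 P2 on2 coll) ib jb"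
      using nash_block_of_nash_coop[OF assms(1-3)] assms(4,5) unfolding blocking_pair_def by auto
  qed
qed

end
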